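(* Let $(H,+)$ be a nontrivial additive subgroup of $(\mathbb R,+)$, let $r\in\mathbb R$ with $0<r\le\frac12$ or $r\ge2$ such that $rH=H$, and let $C=\langle x\rangle$ be an infinite cyclic group. Let $G=H\rtimes C$ be the semidirect product in which $x$ acts on $H$ by multiplication by $r$, i.e. $xzx^{-1}=rz$ for all $z\in H$. Then for every $t\in H\setminus\{0\}$, the elements $tx$ and $x$ generate a free submonoid of $G$ of rank $2$ (in particular a noncommutative free monoid). *)

theory Defs
  imports Complex_Main "HOL-Algebra.Group"
begin

text \<open>Elements are pairs (h, n) standing for h x^n, h in H, n in Z.
  Multiplication: (h x^m)(k x^n) = (h + r^m k) x^(m+n).\<close>
definition sdprod :: "real set \<Rightarrow> real \<Rightarrow> (real \<times> int) monoid" where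
  "sdprod H r = \<lparr> carrier = H \<times> UNIV,
                  mult = (\<lambda>(h, m) (k, n). (h + r powi m * k, m + n)),
                  one = (0, 0) \<rparr>"

definition sd_x :: "real \<times> int" where "sd_x = (0, 1)"
definition sd_h :: "real \<Rightarrow> real \<times> int" where "sd_h t = (t, 0)"

definition word_eval :: "('a, 'b) monoid_scheme \<Rightarrow> 'a \<Rightarrow> 'a \<Rightarrow> bool list \<Rightarrow> 'a" where
  "word_eval G a b w = foldr (\<lambda>c g. (if c then a else b) \<otimes>\<^bsub>G\<^esub> g) w \<one>\<^bsub>G\<^esub>"

definition free_monoid_rank2 :: "('a, 'b) monoid_scheme \<Rightarrow> 'a \<Rightarrow> 'a \<Rightarrow> bool" where
  "free_monoid_rank2 G a b \<longleftrightarrow> inj (word_eval G a b)"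

end

theory Submission
  imports Defs
begin

(* Writing a = t x and b = x, a word w = c_0 c_1 ... c_(n-1) over {a, b}
   evaluates in H \<rtimes> <x> to the pair (t * V_r(w), n), where V_r(w) is the
   "r-adic value" of w: the sum of r^i over the positions i carrying the letter a.
   So two words with equal images have the same length and, as t \<noteq> 0, the same
   r-adic value.  For 0 < r \<le> 1/2 the r-adic value of a word is below 2, hence
   the tail r * V_r(w') of w = c # w' lies in [0, 1) and the leading letter is
   recovered as the integer part of V_r(w); induction gives injectivity on words of
   a fixed length.  For r \<ge> 2 we reduce to the ratio 1/r \<le> 1/2 by reversing
   words, since r^n * V_(1/r)(rev w) = r * V_r(w) for words of length n.
   The file develops V_r and its injectivity first, then computes word_eval in the
   semidirect product, and derives the theorem from these two facts. *)

definition word_value :: "real \<Rightarrow> bool list \<Rightarrow> real" where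
  "word_value r w = foldr (\<lambda>c v. (if c then 1 else 0) + r * v) w 0"

lemma word_value_simps [simp]:
  "word_value r [] = 0"
  "word_value r (c # w) = (if c then 1 else 0) + r * word_value r w"
  by (simp_all add: word_value_def)

lemma word_value_nonneg: "0 \<le> r \<Longrightarrow> 0 \<le> word_value r w"
  by (induction w) auto

lemma word_value_less_2:
  assumes "0 \<le> r" "r \<le> 1/2"
  shows "word_value r w < 2"
proof (induction w)
  case (Cons c w)
  have "r * word_value r w \<le> 1/2 * word_value r w"
    using assms word_value_nonneg[of r w] by (intro mult_right_mono) auto
  then show ?case using Cons by auto
qed simp

(* Consequently the contribution of the tail of a word lies in [0, 1): it cannot
   change the integer part, which is the leading letter. *)
lemma word_value_tail_bounds:
  assumes "0 \<le> r" "r \<le> 1/2"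
  shows "0 \<le> r * word_value r w" "r * word_value r w < 1"
proof -
  have v: "0 \<le> word_value r w" "word_value r w < 2"
    using assms word_value_nonneg word_value_less_2 by auto
  then show "0 \<le> r * word_value r w" using assms by simp
  have "r * word_value r w \<le> 1/2 * word_value r w"
    using assms v by (intro mult_right_mono) auto
  then show "r * word_value r w < 1" using v by simp
qed

lemma word_value_inj_small:
  assumes "0 < r" "r \<le> 1/2"
    and "length w = length w'" "word_value r w = word_value r w'"
  shows "w = w'"
  using assms(3,4)
proof (induction w arbitrary: w')
  case (Cons c w)
  then obtain c' u where w': "w' = c' # u" by (cases w') auto
  have eq: "(if c then 1 else 0) + r * word_value r w = (if c' then 1 else 0) + r * word_value r u"
    using Cons.prems w' by simp
  have "c = c'"
    using eq word_value_tail_bounds[OF less_imp_le[OF assms(1)] assms(2), of w]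
      word_value_tail_bounds[OF less_imp_le[OF assms(1)] assms(2), of u]
    by (cases c; cases c') auto
  moreover from this eq have "word_value r w = word_value r u" using assms(1) by simp
  ultimately show ?case using Cons w' by simp
qed simp

lemma word_value_snoc:
  "word_value r (w @ [c]) = word_value r w + (if c then 1 else 0) * r ^ length w"
  by (induction w) (auto simp: algebra_simps)

lemma word_value_rev:
  assumes "r \<noteq> 0"
  shows "r ^ length w * word_value (1/r) (rev w) = r * word_value r w"
proof (induction w)
  case (Cons c w)
  have cancel: "r ^ length w * (1/r) ^ length w = 1"
    using assms by (simp add: power_one_over)
  have "r ^ length (c # w) * word_value (1/r) (rev (c # w))
      = r * (r ^ length w * word_value (1/r) (rev w))
        + (if c then 1 else 0) * r * (r ^ length w * (1/r) ^ length w)"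
    by (simp add: word_value_snoc algebra_simps)
  then show ?case using Cons cancel by (simp add: algebra_simps)
qed simp

lemma word_value_inj:
  assumes "(0 < r \<and> r \<le> 1/2) \<or> r \<ge> 2"
    and "length w = length w'" "word_value r w = word_value r w'"
  shows "w = w'"
proof (cases "r \<ge> 2")
  case True
  have "r ^ length w * word_value (1/r) (rev w) = r ^ length w * word_value (1/r) (rev w')"
    using word_value_rev[of r w] word_value_rev[of r w'] True assms(2,3) by simp
  then have "word_value (1/r) (rev w) = word_value (1/r) (rev w')" using True by simp
  then have "rev w = rev w'"
    using word_value_inj_small[of "1/r" "rev w" "rev w'"] True assms(2) by simp
  then show ?thesis by simp
next
  case False
  then show ?thesis using word_value_inj_small assms by auto
qed

lemma word_eval_sdprod:
  "word_eval (sdprod H r) (t, 1) (0, 1) w = (t * word_value r w, int (length w))"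
proof (induction w)
  case (Cons c w)
  have "word_eval (sdprod H r) (t, 1) (0, 1) (c # w)
      = (if c then (t, 1) else (0, 1)) \<otimes>\<^bsub>sdprod H r\<^esub> word_eval (sdprod H r) (t, 1) (0, 1) w"
    by (simp add: word_eval_def)
  then show ?case using Cons by (auto simp: sdprod_def algebra_simps)
qed (simp add: word_eval_def sdprod_def)

theorem lemma3p7:
  fixes H :: "real set" and r t :: real
  assumes "0 \<in> H"
    and "\<And>a b. a \<in> H \<Longrightarrow> b \<in> H \<Longrightarrow> a + b \<in> H"
    and "\<And>a. a \<in> H \<Longrightarrow> - a \<in> H"
    and "H \<noteq> {0}"
    and "(0 < r \<and> r \<le> 1/2) \<or> r \<ge> 2"
    and "(\<lambda>z. r * z) ` H = H"
    and "t \<in> H" and "t \<noteq> 0"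
  shows "free_monoid_rank2 (sdprod H r) (sd_h t \<otimes>\<^bsub>sdprod H r\<^esub> sd_x) sd_x"
proof -
  have tx: "sd_h t \<otimes>\<^bsub>sdprod H r\<^esub> sd_x = (t, 1)"
    by (simp add: sd_h_def sd_x_def sdprod_def)
  show ?thesis
    unfolding free_monoid_rank2_def tx unfolding sd_x_def
  proof (rule injI)
    fix w w'
    assume "word_eval (sdprod H r) (t, 1) (0, 1) w = word_eval (sdprod H r) (t, 1) (0, 1) w'"
    then have "length w = length w'" "t * word_value r w = t * word_value r w'"
      by (simp_all add: word_eval_sdprod)
    then have "word_value r w = word_value r w'" using \<open>t \<noteq> 0\<close> by simp
    then show "w = w'" using word_value_inj[OF assms(5)] \<open>length w = length w'\<close> by blast
  qed
qed

end
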